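(* Let $M$ be a $po$-$\Gamma$-semigroup. The following are equivalent: (1) $M$ is strongly regular. (2) $M$ is left regular, right regular, and for every $a\in M$ the set $(M\Gamma a\Gamma M]$ is a strongly regular sub-$\Gamma$-semigroup of $M$. (3) For every $a\in M$, $a\in (M\Gamma a]\cap (a\Gamma M]$ and $(M\Gamma a\Gamma M]$ is a strongly regular sub-$\Gamma$-semigroup of $M$.
   Context: A $po$-$\Gamma$-semigroup is a triple $(M,\Gamma,\le)$ where $M,\Gamma$ are nonempty sets with a map $M\times\Gamma\times M\to M$, $(a,\gamma,b)\mapsto a\gamma b$, satisfying $(a\gamma b)\mu c=a\gamma(b\mu c)$ for all $a,b,c\in M$, $\gamma,\mu\in\Gamma$, and $\le$ is a partial order on $M$ such that $a\le b$ implies $a\gamma c\le b\gamma c$ and $c\gamma a\le c\gamma b$ for all $c\in M$, $\gamma\in\Gamma$. For $A,B\subseteq M$, $A\Gamma B=\{a\gamma b: a\in A,\gamma\in\Gamma,b\in B\}$ (with $a\Gamma B$ meaning $\{a\}\Gamma B$, etc.), and $(A]=\{t\in M: t\le a \text{ for some } a\in A\}$. $M$ is left regular if $a\in(M\Gamma a\Gamma a]$ for all $a\in M$; right regular if $a\in(a\Gamma a\Gamma M]$ for all $a\in M$. A nonempty subset $T\subseteq M$ is a sub-$\Gamma$-semigroup if $T\Gamma T\subseteq T$; it is then a $po$-$\Gamma$-semigroup with the restricted operation and order. A $po$-$\Gamma$-semigroup $T$ is strongly regular if for every $a\in T$ there exist $x\in T$ and $\gamma,\mu\in\Gamma$ such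 that $a\le a\gamma x\mu a$ and $a\gamma x=x\gamma a=x\mu a=a\mu x$. *)

theory Defs
  imports Main
begin

definition po_gamma_semigroup ::
  "'a set \<Rightarrow> 'g set \<Rightarrow> ('a \<Rightarrow> 'g \<Rightarrow> 'a \<Rightarrow> 'a) \<Rightarrow> ('a \<Rightarrow> 'a \<Rightarrow> bool) \<Rightarrow> bool" where
  "po_gamma_semigroup M G op le \<longleftrightarrow>
     M \<noteq> {} \<and> G \<noteq> {} \<and>
     (\<forall>a\<in>M. \<forall>g\<in>G. \<forall>b\<in>M. op a g b \<in> M) \<and>
     (\<forall>a\<in>M. \<forall>b\<in>M. \<forall>c\<in>M. \<forall>g\<in>G. \<forall>m\<in>G. op (op a g b) m c = op a g (op b m c)) \<and>
     (\<forall>a\<in>M. le a a) \<and>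
     (\<forall>a\<in>M. \<forall>b\<in>M. le a b \<and> le b a \<longrightarrow> a = b) \<and>
     (\<forall>a\<in>M. \<forall>b\<in>M. \<forall>c\<in>M. le a b \<and> le b c \<longrightarrow> le a c) \<and>
     (\<forall>a\<in>M. \<forall>b\<in>M. le a b \<longrightarrow> (\<forall>c\<in>M. \<forall>g\<in>G. le (op a g c) (op b g c) \<and> le (op c g a) (op c g b)))"

definition gprod :: "'g set \<Rightarrow> ('a \<Rightarrow> 'g \<Rightarrow> 'a \<Rightarrow> 'a) \<Rightarrow> 'a set \<Rightarrow> 'a set \<Rightarrow> 'a set" where
  "gprod G op A B = {op a g b | a g b. a \<in> A \<and> g \<in> G \<and> b \<in> B}"

text \<open>(A] = elements of M below some element of A.\<close>
definition down :: "'a set \<Rightarrow> ('a \<Rightarrow> 'a \<Rightarrow> bool) \<Rightarrow> 'a set \<Rightarrow> 'a set" where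
  "down M le A = {t \<in> M. \<exists>a\<in>A. le t a}"

definition left_regular :: "'a set \<Rightarrow> 'g set \<Rightarrow> ('a \<Rightarrow> 'g \<Rightarrow> 'a \<Rightarrow> 'a) \<Rightarrow> ('a \<Rightarrow> 'a \<Rightarrow> bool) \<Rightarrow> bool" where
  "left_regular M G op le \<longleftrightarrow>
     (\<forall>a\<in>M. a \<in> down M le (gprod G op (gprod G op M {a}) {a}))"

definition right_regular :: "'a set \<Rightarrow> 'g set \<Rightarrow> ('a \<Rightarrow> 'g \<Rightarrow> 'a \<Rightarrow> 'a) \<Rightarrow> ('a \<Rightarrow> 'a \<Rightarrow> bool) \<Rightarrow> bool" where
  "right_regular M G op le \<longleftrightarrow>
     (\<forall>a\<in>M. a \<in> down M le (gprod G op (gprod G op {a} {a}) M))"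

definition sub_gamma_semigroup :: "'a set \<Rightarrow> 'g set \<Rightarrow> ('a \<Rightarrow> 'g \<Rightarrow> 'a \<Rightarrow> 'a) \<Rightarrow> 'a set \<Rightarrow> bool" where
  "sub_gamma_semigroup M G op T \<longleftrightarrow> T \<noteq> {} \<and> T \<subseteq> M \<and> gprod G op T T \<subseteq> T"

text \<open>Strong regularity of the po-Gamma-semigroup with carrier T (operation/order restricted).\<close>
definition strongly_regular :: "'a set \<Rightarrow> 'g set \<Rightarrow> ('a \<Rightarrow> 'g \<Rightarrow> 'a \<Rightarrow> 'a) \<Rightarrow> ('a \<Rightarrow> 'a \<Rightarrow> bool) \<Rightarrow> bool" where
  "strongly_regular T G op le \<longleftrightarrow>
     (\<forall>a\<in>T. \<exists>x\<in>T. \<exists>g\<in>G. \<exists>m\<in>G.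
        le a (op (op a g x) m a) \<and>
        op a g x = op x g a \<and> op x g a = op x m a \<and> op x m a = op a m x)"

end

theory Submission
  imports Defs
begin

text \<open>If \<open>a \<le> a\<gamma>x\<mu>a\<close> with \<open>a\<gamma>x = x\<gamma>a = x\<mu>a = a\<mu>x\<close>, the product \<open>a\<gamma>x\<mu>a\<close> can be rearranged
  into \<open>x\<gamma>a\<mu>a\<close>, \<open>a\<gamma>a\<mu>x\<close> and \<open>a\<gamma>(x\<mu>a)\<close>, which gives left and right regularity and
  \<open>a \<in> (M\<Gamma>a] \<inter> (a\<Gamma>M]\<close>. Conversely each of these conditions puts \<open>a\<close> into the ideal
  \<open>(M\<Gamma>a\<Gamma>M]\<close>, so strong regularity of that ideal yields a witness for \<open>a\<close> in \<open>M\<close>.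
  Finally strong regularity is inherited by every ideal \<open>T\<close> with \<open>M\<Gamma>T\<Gamma>M \<subseteq> T\<close>:
  if \<open>x\<close> is a witness for \<open>b \<in> T\<close>, then so is \<open>x\<mu>b\<mu>x \<in> T\<close>, with both parameters equal to \<open>\<mu>\<close>.\<close>

lemma gprod_mono: "A \<subseteq> A' \<Longrightarrow> B \<subseteq> B' \<Longrightarrow> gprod G op A B \<subseteq> gprod G op A' B'"
  unfolding gprod_def by blast

lemma gprodI: "a \<in> A \<Longrightarrow> g \<in> G \<Longrightarrow> b \<in> B \<Longrightarrow> op a g b \<in> gprod G op A B"
  unfolding gprod_def by blast

lemma gprodE:
  assumes "z \<in> gprod G op A B"
  obtains a g b where "z = op a g b" "a \<in> A" "g \<in> G" "b \<in> B"
  using assms unfolding gprod_def by blast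

lemma down_mono: "A \<subseteq> B \<Longrightarrow> down M le A \<subseteq> down M le B"
  unfolding down_def by blast

lemma down_subset: "down M le A \<subseteq> M"
  unfolding down_def by blast

lemma downI: "t \<in> M \<Longrightarrow> z \<in> A \<Longrightarrow> le t z \<Longrightarrow> t \<in> down M le A"
  unfolding down_def by blast

lemma downE:
  assumes "t \<in> down M le A"
  obtains z where "t \<in> M" "z \<in> A" "le t z"
  using assms unfolding down_def by blast

lemma strongly_regular_if_covered:
  assumes "\<And>a. a \<in> M \<Longrightarrow> \<exists>T \<subseteq> M. a \<in> T \<and> strongly_regular T G op le"
  shows "strongly_regular M G op le"
  unfolding strongly_regular_def
proof
  fix a assume "a \<in> M"
  then obtain T where "T \<subseteq> M" "a \<in> T" and "strongly_regular T G op le"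
    using assms by blast
  then show "\<exists>x\<in>M. \<exists>g\<in>G. \<exists>m\<in>G. le a (op (op a g x) m a) \<and>
      op a g x = op x g a \<and> op x g a = op x m a \<and> op x m a = op a m x"
    unfolding strongly_regular_def by blast
qed

locale po_gamma =
  fixes M :: "'a set" and G :: "'g set" and op :: "'a \<Rightarrow> 'g \<Rightarrow> 'a \<Rightarrow> 'a"
    and le :: "'a \<Rightarrow> 'a \<Rightarrow> bool"
  assumes params_nonempty: "G \<noteq> {}"
    and closed: "\<forall>a\<in>M. \<forall>g\<in>G. \<forall>b\<in>M. op a g b \<in> M"
    and assoc: "\<forall>a\<in>M. \<forall>b\<in>M. \<forall>c\<in>M. \<forall>g\<in>G. \<forall>m\<in>G. op (op a g b) m c = op a g (op b m c)"
    and refl: "\<forall>a\<in>M. le a a"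
    and trans: "\<forall>a\<in>M. \<forall>b\<in>M. \<forall>c\<in>M. le a b \<and> le b c \<longrightarrow> le a c"
    and compatible: "\<forall>a\<in>M. \<forall>b\<in>M. le a b \<longrightarrow> (\<forall>c\<in>M. \<forall>g\<in>G. le (op a g c) (op b g c) \<and> le (op c g a) (op c g b))"

lemma po_gamma_if_po_gamma_semigroup:
  "po_gamma_semigroup M G op le \<Longrightarrow> po_gamma M G op le"
  unfolding po_gamma_semigroup_def po_gamma_def by (elim conjE) (intro conjI; assumption)

context po_gamma
begin

lemma op_closed [simp]: "a \<in> M \<Longrightarrow> g \<in> G \<Longrightarrow> b \<in> M \<Longrightarrow> op a g b \<in> M"
  using closed by blast

lemma op_assoc:
  "a \<in> M \<Longrightarrow> b \<in> M \<Longrightarrow> c \<in> M \<Longrightarrow> g \<in> G \<Longrightarrow> m \<in> G \<Longrightarrow>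
    op (op a g b) m c = op a g (op b m c)"
  using assoc by blast

lemma le_refl: "a \<in> M \<Longrightarrow> le a a"
  using refl by blast

lemma le_trans: "le a b \<Longrightarrow> le b c \<Longrightarrow> a \<in> M \<Longrightarrow> b \<in> M \<Longrightarrow> c \<in> M \<Longrightarrow> le a c"
  using trans by blast

lemma le_op_right: "le a b \<Longrightarrow> a \<in> M \<Longrightarrow> b \<in> M \<Longrightarrow> c \<in> M \<Longrightarrow> g \<in> G \<Longrightarrow> le (op a g c) (op b g c)"
  using compatible by blast

lemma le_op_left: "le a b \<Longrightarrow> a \<in> M \<Longrightarrow> b \<in> M \<Longrightarrow> c \<in> M \<Longrightarrow> g \<in> G \<Longrightarrow> le (op c g a) (op c g b)"
  using compatible by blast

abbreviation principal_ideal :: "'a \<Rightarrow> 'a set" where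
  "principal_ideal a \<equiv> down M le (gprod G op (gprod G op M {a}) M)"

lemma mem_principal_ideal_iff:
  "t \<in> principal_ideal a \<longleftrightarrow>
    t \<in> M \<and> (\<exists>p\<in>M. \<exists>g\<in>G. \<exists>m\<in>G. \<exists>q\<in>M. le t (op (op p g a) m q))"
  unfolding down_def gprod_def by blast

lemma principal_idealI:
  "t \<in> M \<Longrightarrow> p \<in> M \<Longrightarrow> g \<in> G \<Longrightarrow> m \<in> G \<Longrightarrow> q \<in> M \<Longrightarrow> le t (op (op p g a) m q) \<Longrightarrow>
    t \<in> principal_ideal a"
  unfolding mem_principal_ideal_iff by blast

lemma principal_ideal_nonempty:
  assumes "a \<in> M" shows "principal_ideal a \<noteq> {}"
proof -
  obtain g where "g \<in> G" using params_nonempty by blast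
  with assms have "op (op a g a) g a \<in> principal_ideal a"
    by (intro principal_idealI) (auto intro: le_refl)
  then show ?thesis by blast
qed

lemma principal_ideal_op_right:
  assumes "a \<in> M" "t \<in> principal_ideal a" "h \<in> G" "s \<in> M"
  shows "op t h s \<in> principal_ideal a"
proof -
  from assms(2) obtain p g m q where t: "t \<in> M" and pq: "p \<in> M" "g \<in> G" "m \<in> G" "q \<in> M"
    and "le t (op (op p g a) m q)"
    unfolding mem_principal_ideal_iff by blast
  then have "le (op t h s) (op (op (op p g a) m q) h s)"
    using assms by (intro le_op_right) auto
  also have "op (op (op p g a) m q) h s = op (op p g a) m (op q h s)"
    using assms pq by (simp add: op_assoc)
  finally show ?thesis
    using assms t pq by (intro principal_idealI) auto
qed

lemma principal_ideal_op_left: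
  assumes "a \<in> M" "t \<in> principal_ideal a" "h \<in> G" "s \<in> M"
  shows "op s h t \<in> principal_ideal a"
proof -
  from assms(2) obtain p g m q where t: "t \<in> M" and pq: "p \<in> M" "g \<in> G" "m \<in> G" "q \<in> M"
    and "le t (op (op p g a) m q)"
    unfolding mem_principal_ideal_iff by blast
  then have "le (op s h t) (op s h (op (op p g a) m q))"
    using assms by (intro le_op_left) auto
  also have "op s h (op (op p g a) m q) = op (op (op s h p) g a) m q"
    using assms pq by (simp add: op_assoc)
  finally show ?thesis
    using assms t pq by (intro principal_idealI) auto
qed

lemma principal_ideal_absorbs:
  assumes "a \<in> M"
  shows "gprod G op (gprod G op M (principal_ideal a)) M \<subseteq> principal_ideal a"
  using assms principal_ideal_op_left principal_ideal_op_right
  by (auto elim!: gprodE)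

lemma principal_ideal_sub_gamma_semigroup:
  assumes "a \<in> M" shows "sub_gamma_semigroup M G op (principal_ideal a)"
  unfolding sub_gamma_semigroup_def
proof (intro conjI)
  show "principal_ideal a \<noteq> {}" using assms by (rule principal_ideal_nonempty)
  show "principal_ideal a \<subseteq> M" by (rule down_subset)
  show "gprod G op (principal_ideal a) (principal_ideal a) \<subseteq> principal_ideal a"
    using assms down_subset principal_ideal_op_right by (fastforce elim!: gprodE)
qed

lemma strongly_regular_witness_sandwich:
  assumes M: "b \<in> M" "x \<in> M" "g \<in> G" "m \<in> G"
    and le: "le b (op (op b g x) m b)"
    and eq: "op b g x = op x g b" "op x g b = op x m b" "op x m b = op b m x"
  defines "y \<equiv> op (op x m b) m x"
  shows "le b (op (op b m y) m b)" and "op b m y = op y m b"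
proof -
  define e where "e = op b m x"
  have eM: "e \<in> M" unfolding e_def using M by simp
  have le_e: "le b (op e m b)"
    using le unfolding e_def eq(1,2,3) .
  then have "le (op e m b) (op e m (op e m b))"
    using M eM by (simp add: le_op_left)
  with le_e have "le b (op e m (op e m b))"
    using M eM by (simp add: le_trans[of b "op e m b"])
  also have "op e m (op e m b) = op (op b m y) m b"
    unfolding y_def e_def using M by (simp add: op_assoc)
  finally show "le b (op (op b m y) m b)" .
  have "op b m y = op e m e"
    unfolding y_def e_def using M by (simp add: op_assoc)
  also have "\<dots> = op y m b"
    unfolding y_def e_def eq(3)[symmetric] using M by (simp add: op_assoc)
  finally show "op b m y = op y m b" .
qed

lemma strongly_regular_ideal:
  assumes SR: "strongly_regular M G op le"
    and T: "T \<subseteq> M" "gprod G op (gprod G op M T) M \<subseteq> T"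
  shows "strongly_regular T G op le"
  unfolding strongly_regular_def
proof
  fix b assume "b \<in> T"
  with T have bM: "b \<in> M" by blast
  then obtain x g m where x: "x \<in> M" "g \<in> G" "m \<in> G"
    and wit: "le b (op (op b g x) m b)"
      "op b g x = op x g b" "op x g b = op x m b" "op x m b = op b m x"
    using SR unfolding strongly_regular_def by blast
  define y where "y = op (op x m b) m x"
  have "y \<in> gprod G op (gprod G op M T) M"
    unfolding y_def using \<open>b \<in> T\<close> x by (intro gprodI)
  with T have "y \<in> T" by blast
  moreover have "le b (op (op b m y) m b) \<and>
      op b m y = op y m b \<and> op y m b = op y m b \<and> op y m b = op b m y"
    using strongly_regular_witness_sandwich[OF bM x wit] unfolding y_def by simp
  ultimately show "\<exists>y\<in>T. \<exists>g\<in>G. \<exists>m\<in>G. le b (op (op b g y) m b) \<and>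
      op b g y = op y g b \<and> op y g b = op y m b \<and> op y m b = op b m y"
    using x(3) by blast
qed

lemma strongly_regular_principal_ideal:
  "strongly_regular M G op le \<Longrightarrow> a \<in> M \<Longrightarrow> strongly_regular (principal_ideal a) G op le"
  by (rule strongly_regular_ideal[OF _ down_subset principal_ideal_absorbs])

lemma strongly_regularE:
  assumes "strongly_regular M G op le" "a \<in> M"
  obtains x g m where "x \<in> M" "g \<in> G" "m \<in> G"
    "le a (op (op a g x) m a)" "le a (op (op x g a) m a)"
    "le a (op (op a g a) m x)" "le a (op a g (op x m a))"
proof -
  obtain x g m where x: "x \<in> M" "g \<in> G" "m \<in> G" and le: "le a (op (op a g x) m a)"
    and eq: "op a g x = op x g a" "op x g a = op x m a" "op x m a = op a m x"
    using assms unfolding strongly_regular_def by blast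
  have eq1: "op (op a g x) m a = op (op x g a) m a" by (simp only: eq(1))
  have eq2: "op (op a g x) m a = op (op a g a) m x"
    using assms(2) x by (simp add: op_assoc eq(3))
  have eq3: "op (op a g x) m a = op a g (op x m a)"
    using assms(2) x by (simp add: op_assoc)
  show ?thesis by (rule that[OF x le le[unfolded eq1] le[unfolded eq2] le[unfolded eq3]])
qed

lemma strongly_regular_imp_left_regular:
  assumes "strongly_regular M G op le" shows "left_regular M G op le"
  unfolding left_regular_def
proof
  fix a assume a: "a \<in> M"
  with assms obtain x g m where "x \<in> M" "g \<in> G" "m \<in> G" "le a (op (op x g a) m a)"
    by (rule strongly_regularE)
  with a show "a \<in> down M le (gprod G op (gprod G op M {a}) {a})"
    by (blast intro: downI gprodI)
qed

lemma strongly_regular_imp_right_regular: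
  assumes "strongly_regular M G op le" shows "right_regular M G op le"
  unfolding right_regular_def
proof
  fix a assume a: "a \<in> M"
  with assms obtain x g m where "x \<in> M" "g \<in> G" "m \<in> G" "le a (op (op a g a) m x)"
    by (rule strongly_regularE)
  with a show "a \<in> down M le (gprod G op (gprod G op {a} {a}) M)"
    by (blast intro: downI gprodI)
qed

lemma strongly_regular_imp_mem_left_right_ideals:
  assumes "strongly_regular M G op le" "a \<in> M"
  shows "a \<in> down M le (gprod G op M {a}) \<inter> down M le (gprod G op {a} M)"
proof -
  from assms obtain x g m where x: "x \<in> M" "g \<in> G" "m \<in> G"
    and "le a (op (op a g x) m a)" "le a (op a g (op x m a))"
    by (rule strongly_regularE)
  with assms(2) show ?thesis
    by (blast intro: downI gprodI op_closed)
qed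

lemma mem_principal_ideal_if_left_regular:
  assumes "a \<in> M" "a \<in> down M le (gprod G op (gprod G op M {a}) {a})"
  shows "a \<in> principal_ideal a"
proof -
  have "gprod G op (gprod G op M {a}) {a} \<subseteq> gprod G op (gprod G op M {a}) M"
    using assms(1) by (intro gprod_mono) auto
  then show ?thesis using assms(2) down_mono by blast
qed

lemma mem_principal_ideal_if_mem_left_right_ideals:
  assumes a: "a \<in> M" and "a \<in> down M le (gprod G op M {a})" "a \<in> down M le (gprod G op {a} M)"
  shows "a \<in> principal_ideal a"
proof -
  obtain x g where x: "x \<in> M" "g \<in> G" and left: "le a (op x g a)"
    using assms(2) by (auto elim!: downE gprodE)
  obtain y m where y: "y \<in> M" "m \<in> G" and right: "le a (op a m y)"
    using assms(3) by (auto elim!: downE gprodE)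
  from right have "le (op x g a) (op x g (op a m y))"
    using a x y by (simp add: le_op_left)
  with left have "le a (op x g (op a m y))"
    using a x y by (simp add: le_trans[of a "op x g a"])
  also have "op x g (op a m y) = op (op x g a) m y"
    using a x y by (simp add: op_assoc)
  finally show ?thesis
    by (rule principal_idealI[OF a x y(2,1)])
qed

end

theorem theorem9:
  fixes M :: "'a set" and G :: "'g set" and op :: "'a \<Rightarrow> 'g \<Rightarrow> 'a \<Rightarrow> 'a"
    and le :: "'a \<Rightarrow> 'a \<Rightarrow> bool"
  assumes "po_gamma_semigroup M G op le"
  shows "(strongly_regular M G op le
            \<longleftrightarrow> (left_regular M G op le \<and> right_regular M G op le \<and>
                 (\<forall>a\<in>M. sub_gamma_semigroup M G op (down M le (gprod G op (gprod G op M {a}) M)) \<and>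
                        strongly_regular (down M le (gprod G op (gprod G op M {a}) M)) G op le)))
       \<and> (strongly_regular M G op le
            \<longleftrightarrow> (\<forall>a\<in>M. a \<in> down M le (gprod G op M {a}) \<inter> down M le (gprod G op {a} M) \<and>
                        sub_gamma_semigroup M G op (down M le (gprod G op (gprod G op M {a}) M)) \<and>
                        strongly_regular (down M le (gprod G op (gprod G op M {a}) M)) G op le))"
proof -
  interpret po_gamma M G op le
    using assms by (rule po_gamma_if_po_gamma_semigroup)
  have ideals: "\<forall>a\<in>M. sub_gamma_semigroup M G op (principal_ideal a) \<and>
      strongly_regular (principal_ideal a) G op le" if "strongly_regular M G op le"
    using that principal_ideal_sub_gamma_semigroup strongly_regular_principal_ideal by blast
  have covered: "strongly_regular M G op le"
    if "\<And>a. a \<in> M \<Longrightarrow> a \<in> principal_ideal a \<and> strongly_regular (principal_ideal a) G op le"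
    using that down_subset[of M le] by (intro strongly_regular_if_covered) blast
  show ?thesis
  proof (intro conjI; rule iffI)
    assume "strongly_regular M G op le"
    then show "left_regular M G op le \<and> right_regular M G op le \<and>
        (\<forall>a\<in>M. sub_gamma_semigroup M G op (principal_ideal a) \<and>
          strongly_regular (principal_ideal a) G op le)"
      using ideals strongly_regular_imp_left_regular strongly_regular_imp_right_regular by blast
  next
    assume "left_regular M G op le \<and> right_regular M G op le \<and>
        (\<forall>a\<in>M. sub_gamma_semigroup M G op (principal_ideal a) \<and>
          strongly_regular (principal_ideal a) G op le)"
    then show "strongly_regular M G op le"
      using mem_principal_ideal_if_left_regular unfolding left_regular_def by (intro covered) blast
  next
    assume "strongly_regular M G op le"
    then show "\<forall>a\<in>M. a \<in> down M le (gprod G op M {a}) \<inter> down M le (gprod G op {a} M) \<and>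
        sub_gamma_semigroup M G op (principal_ideal a) \<and> strongly_regular (principal_ideal a) G op le"
      using ideals strongly_regular_imp_mem_left_right_ideals by blast
  next
    assume "\<forall>a\<in>M. a \<in> down M le (gprod G op M {a}) \<inter> down M le (gprod G op {a} M) \<and>
        sub_gamma_semigroup M G op (principal_ideal a) \<and> strongly_regular (principal_ideal a) G op le"
    then show "strongly_regular M G op le"
      using mem_principal_ideal_if_mem_left_right_ideals by (intro covered) blast
  qed
qed

end
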